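(* Let $$f(z)=\frac{1-z-z^2-\sqrt{5z^4+10z^3-z^2-6z+1}}{2-2z-2z^2},$$ where the square root is the formal power series with constant term $1$. Then for every positive integer $n$, the Riordan matrix $\left(\left(\frac{1}{1-z-z^2}\right)^n, f(z)\right)$ is a pseudo-involution.
   Context: A Riordan matrix is a pair $(g(z),f(z))$ of formal power series over $\mathbb{C}$ with $g(z)=\sum_{n\ge 0} g_n z^n$, $g_0\neq 0$, and $f(z)=\sum_{n\ge 1} f_n z^n$ with $f_1\neq 0$; it represents the infinite lower-triangular matrix whose $k$-th column ($k\ge 0$) has generating function $g(z)f(z)^k$. Riordan matrices form a group under matrix multiplication, where $(g(z),f(z))*(h(z),l(z))=(g(z)h(f(z)),\,l(f(z)))$ and the identity is $(1,z)$. Let $M=(1,-z)$. A Riordan matrix $L$ is called a pseudo-involution if $(L*M)*(L*M)=(1,z)$. *)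

theory Defs
  imports "HOL-Computational_Algebra.Formal_Power_Series"
begin

type_synonym riordan = "complex fps \<times> complex fps"

definition is_riordan :: "riordan \<Rightarrow> bool" where
  "is_riordan L \<longleftrightarrow> fps_nth (fst L) 0 \<noteq> 0 \<and> fps_nth (snd L) 0 = 0 \<and> fps_nth (snd L) 1 \<noteq> 0"

definition riordan_mult :: "riordan \<Rightarrow> riordan \<Rightarrow> riordan" (infixl \<open>**\<^sub>R\<close> 70) where
  "riordan_mult L K = (fst L * (fst K oo snd L), snd K oo snd L)"

definition riordan_id :: riordan where
  "riordan_id = (1, fps_X)"

definition riordan_M :: riordan where
  "riordan_M = (1, - fps_X)"

definition pseudo_involution :: "riordan \<Rightarrow> bool" where
  "pseudo_involution L \<longleftrightarrow> is_riordan L \<and>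
     (L **\<^sub>R riordan_M) **\<^sub>R (L **\<^sub>R riordan_M) = riordan_id"

text \<open>Formal square root with constant term 1.\<close>
definition fps_sqrt1 :: "complex fps \<Rightarrow> complex fps" where
  "fps_sqrt1 a = fps_radical (\<lambda>_ _. 1) 2 a"

end

theory Submission
  imports Defs
begin

unbundle fps_syntax

text \<open>With \<open>s = z + z\<^sup>2\<close>, the series \<open>f\<close> is the root of \<open>(1 - s) (f\<^sup>2 - f) + s = 0\<close> vanishing at 0,
  so \<open>u = -f\<close> satisfies \<open>s \<circ> u = \<psi> \<circ> s\<close> for the involution \<open>\<psi>(y) = y / (y - 1)\<close>. Being conjugate to
  an involution, \<open>u\<close> is itself an involution, which is the second component of the condition
  \<open>((g, f) M)\<^sup>2 = 1\<close>. The same relation gives \<open>(1 - s) ((1 - s) \<circ> u) = 1\<close>, which takes care of the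
  first component \<open>g (g \<circ> u) = 1\<close> for every power \<open>g = (1 - s)\<^sup>-\<^sup>n\<close>.\<close>

lemma riordan_mult_M:
  assumes "snd L $ 0 = 0"
  shows "L **\<^sub>R riordan_M = (fst L, - snd L)"
  using assms by (simp add: riordan_mult_def riordan_M_def fps_compose_uminus)

lemma pseudo_involutionI:
  assumes riordan: "is_riordan (g, f)"
    and first: "g * (g oo - f) = 1"
    and second: "(- f) oo (- f) = fps_X"
  shows "pseudo_involution (g, f)"
proof -
  have LM: "(g, f) **\<^sub>R riordan_M = (g, - f)"
    using riordan by (simp add: riordan_mult_M is_riordan_def)
  show ?thesis
    unfolding pseudo_involution_def LM
    using riordan first second by (simp add: riordan_mult_def riordan_id_def)
qed

lemma fps_compose_self_eq_X_if_conjugate_involution: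
  fixes s u :: "'a::field fps"
  assumes s0: "s $ 0 = 0" and s1: "s $ 1 \<noteq> 0" and u0: "u $ 0 = 0"
    and rel: "(1 - s) * (s oo u) + s = 0"
  shows "u oo u = fps_X"
proof -
  define t where "t = s oo u"
  define w where "w = u oo u"
  have w0: "w $ 0 = 0"
    using u0 by (simp add: w_def)
  have "((1 - s) * t + s) oo u = 0"
    using rel by (simp add: t_def)
  then have rel_u: "(1 - t) * (s oo w) + t = 0"
    by (simp add: t_def w_def fps_compose_add_distrib fps_compose_sub_distrib
        fps_compose_mult_distrib[OF u0] fps_compose_assoc[OF u0 u0])
  have "(1 - t) * ((s oo w) - s) = ((1 - t) * (s oo w) + t) - ((1 - s) * t + s)"
    by (simp add: algebra_simps)
  also have "\<dots> = 0"
    using rel rel_u by (simp add: t_def)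
  finally have "(1 - t) * ((s oo w) - s) = 0" .
  moreover have "1 - t \<noteq> 0"
  proof
    assume "1 - t = 0"
    then have "(1 - t) $ 0 = 0" by simp
    then show False using s0 by (simp add: t_def)
  qed
  ultimately have sw: "s oo w = s"
    by simp
  have "w = (fps_inv s oo s) oo w"
    using w0 by (simp add: fps_inv[OF s0 s1])
  also have "\<dots> = fps_inv s oo s"
    by (simp add: sw w0 flip: fps_compose_assoc[OF w0 s0])
  finally show ?thesis
    by (simp add: w_def fps_inv[OF s0 s1])
qed

lemma inverse_power_mult_compose_eq_1:
  fixes s u :: "'a::field fps"
  assumes s0: "s $ 0 = 0" and u0: "u $ 0 = 0"
    and rel: "(1 - s) * (s oo u) + s = 0"
  shows "inverse (1 - s) ^ n * (inverse (1 - s) ^ n oo u) = 1"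
proof -
  have h0: "(1 - s) $ 0 \<noteq> 0"
    using s0 by simp
  have "((1 - s) oo u) * (1 - s) = 1"
    using rel by (simp add: fps_compose_sub_distrib algebra_simps)
  then have "inverse ((1 - s) oo u) = 1 - s"
    by (rule fps_inverse_unique)
  then have "inverse (1 - s) ^ n oo u = (1 - s) ^ n"
    by (simp add: fps_compose_power[OF u0, symmetric] fps_inverse_compose[OF u0 h0])
  then show ?thesis
    using inverse_mult_eq_1[OF h0] by (simp flip: power_mult_distrib)
qed

theorem pseudo_involution_if_conjugate_involution:
  fixes s F :: "complex fps"
  assumes s0: "s $ 0 = 0" and s1: "s $ 1 \<noteq> 0"
    and F0: "F $ 0 = 0" and F1: "F $ 1 \<noteq> 0"
    and rel: "(1 - s) * (s oo - F) + s = 0"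
  shows "pseudo_involution (inverse (1 - s) ^ n, F)"
proof (rule pseudo_involutionI)
  have u0: "(- F) $ 0 = 0"
    using F0 by simp
  show "is_riordan (inverse (1 - s) ^ n, F)"
    using s0 F0 F1 by (simp add: is_riordan_def fps_nth_power_0)
  show "inverse (1 - s) ^ n * (inverse (1 - s) ^ n oo - F) = 1"
    using inverse_power_mult_compose_eq_1[OF s0 u0 rel] .
  show "(- F) oo (- F) = fps_X"
    using fps_compose_self_eq_X_if_conjugate_involution[OF s0 s1 u0 rel] .
qed

lemma fps_quadratic_root:
  fixes h s S F :: "'a::field_char_0 fps"
  assumes "h \<noteq> 0" and "S\<^sup>2 = h\<^sup>2 - 4 * h * s" and "F * (2 * h) = h - S"
  shows "h * F\<^sup>2 - h * F + s = 0"
proof -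
  have "S = h - 2 * h * F"
    using assms(3) by (simp add: algebra_simps)
  then have "(h - 2 * h * F)\<^sup>2 = h\<^sup>2 - 4 * h * s"
    using assms(2) by simp
  then have "(4 * h) * (h * F\<^sup>2 - h * F + s) = 0"
    by (simp add: algebra_simps power2_eq_square)
  then show ?thesis
    using assms(1) by simp
qed

definition f_series :: "complex fps" where
  "f_series = (1 - fps_X - fps_X^2
      - fps_sqrt1 (5 * fps_X^4 + 10 * fps_X^3 - fps_X^2 - 6 * fps_X + 1))
      / (2 - 2 * fps_X - 2 * fps_X^2)"

lemma f_series_root:
  "(1 - fps_X - fps_X\<^sup>2) * f_series\<^sup>2 - (1 - fps_X - fps_X\<^sup>2) * f_series + (fps_X + fps_X\<^sup>2) = 0"
    (is "?h * _ - _ + ?s = 0")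
  and f_series_nth_0: "f_series $ 0 = 0"
proof -
  define D :: "complex fps" where "D = 5 * fps_X^4 + 10 * fps_X^3 - fps_X^2 - 6 * fps_X + 1"
  define S where "S = fps_sqrt1 D"
  have h0: "?h $ 0 = 1"
    by simp
  have "S\<^sup>2 = D"
    using power_radical[of D "\<lambda>_ _. 1" 1]
    by (simp add: S_def D_def fps_sqrt1_def numeral_2_eq_2)
  also have "D = ?h\<^sup>2 - 4 * ?h * ?s"
    unfolding D_def by (simp add: algebra_simps power2_eq_square power3_eq_cube power4_eq_xxxx)
  finally have S2: "S\<^sup>2 = ?h\<^sup>2 - 4 * ?h * ?s" .
  have "(2 - 2 * fps_X - 2 * fps_X^2 :: complex fps) = 2 * ?h"
    by (simp add: algebra_simps)
  moreover have "(2 * ?h) $ 0 \<noteq> 0"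
    using h0 by simp
  ultimately have Fd: "f_series * (2 * ?h) = ?h - S"
    unfolding f_series_def S_def D_def
    by (simp add: fps_divide_unit inverse_mult_eq_1 mult.assoc)
  show "?h * f_series\<^sup>2 - ?h * f_series + ?s = 0"
    using fps_quadratic_root[OF _ S2 Fd] h0 by fastforce
  show "f_series $ 0 = 0"
    using arg_cong[OF Fd, of "\<lambda>x. x $ 0"]
    by (simp add: S_def fps_sqrt1_def)
qed

lemma f_series_nth_1: "f_series $ 1 = 1"
proof -
  have "((1 - fps_X - fps_X\<^sup>2) * f_series\<^sup>2 - (1 - fps_X - fps_X\<^sup>2) * f_series
      + (fps_X + fps_X\<^sup>2)) $ 1 = 0"
    using f_series_root by simp
  then show ?thesis
    using f_series_nth_0 by (simp add: power2_eq_square fps_mult_nth_1)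
qed

lemma f_series_functional_equation:
  "(1 - (fps_X + fps_X\<^sup>2)) * ((fps_X + fps_X\<^sup>2) oo - f_series) + (fps_X + fps_X\<^sup>2) = 0"
proof -
  have compose: "(fps_X + fps_X\<^sup>2) oo - f_series = f_series\<^sup>2 - f_series"
    using f_series_nth_0
    by (simp add: fps_compose_add_distrib fps_compose_uminus flip: fps_compose_power)
  show ?thesis
    unfolding compose using f_series_root by (simp add: algebra_simps)
qed

theorem mainTheorem12:
  fixes n :: nat
  assumes "n \<ge> 1"
  defines "F \<equiv> (1 - fps_X - fps_X^2
      - fps_sqrt1 (5 * fps_X^4 + 10 * fps_X^3 - fps_X^2 - 6 * fps_X + 1))
      / (2 - 2 * fps_X - 2 * fps_X^2)"
  shows "pseudo_involution ((inverse (1 - fps_X - fps_X^2 :: complex fps)) ^ n, F)"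
proof -
  define s :: "complex fps" where "s = fps_X + fps_X\<^sup>2"
  have h: "1 - fps_X - fps_X\<^sup>2 = 1 - s" and F: "F = f_series"
    by (simp_all add: s_def F_def f_series_def)
  have s0: "s $ 0 = 0" and s1: "s $ 1 \<noteq> 0"
    by (simp_all add: s_def)
  have F1: "f_series $ 1 \<noteq> 0"
    unfolding f_series_nth_1 by simp
  show ?thesis
    unfolding h F
    using pseudo_involution_if_conjugate_involution[OF s0 s1 f_series_nth_0 F1
        f_series_functional_equation[folded s_def]] .
qed

end
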